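(* Let $G$ be an interval graph with a fixed interval representation, and let $P_1,\ldots,P_\ell$ be a solution of an instance of \textsc{Requirement Induced Disjoint Paths} on $G$ with terminal pairs $(s_1,t_1),\ldots,(s_k,t_k)$. For each $P_a$ that has at least one inner vertex, let $I_{P_a}$ be the union of the intervals of the inner vertices of $P_a$, and say $I_{P_a}$ has color $i$ if $P_a$ joins the vertices representing $s_i$ and $t_i$. Then: (i) for every $i$, every $I_{P_a}$ of color $i$ intersects the intervals of the vertices representing $s_i$ and $t_i$, and intersects no interval of any other terminal vertex; (ii) for distinct $a,b$ (with $P_a,P_b$ having inner vertices), $I_{P_a}\cap I_{P_b}=\emptyset$; (iii) for colors $i\neq j$, there is no interval $I_{P_c}$ of color $j$ that lies between two intervals $I_{P_a},I_{P_b}$ of color $i$.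
   Context: All graphs are finite, undirected, without loops or multiple edges. For a path $P=v_1\cdots v_r$, the vertices $v_1,v_r$ are its ends and $v_2,\ldots,v_{r-1}$ its inner vertices. An edge $v_iv_j$ with $i+1<j$ is an inner chord of $P$ if $v_i$ or $v_j$ is an inner vertex of $P$. Distinct paths $P_1,\ldots,P_\ell$ are mutually induced if (i) no $P_i$ has an inner chord; (ii) two distinct paths $P_i,P_j$ share only vertices that are ends of both paths; (iii) no inner vertex $u$ of some $P_i$ is adjacent to a vertex $v$ of some $P_j$ with $j\neq i$, unless $v$ is an end of both $P_i$ and $P_j$. \textsc{Requirement Induced Disjoint Paths}: the input is a graph $G$, $k$ terminal pairs $(s_1,t_1),\ldots,(s_k,t_k)$ and positive integers $r_1,\ldots,r_k$. Each terminal is placed on ("represented by") a vertex of $G$ (a terminal vertex); several terminals may be represented by the same vertex, but $s_i$ and $t_i$ are represented by distinct vertices, and the unordered pairs of representing vertices are pairwise distinct for different $i$. A solution is a family of $\ell=r_1+\cdots+r_k$ mutually induced paths such that, for each $i$, exactly $r_i$ of them join the vertex representing $s_i$ and the vertex representing $t_i$. An interval representation assigns each vertex $u$ an interval $[l_u,r_u]$ of the real line, all endpoints being distinct integers, such that two vertices are adjacent iff their intervals intersect. For intervals (or unions of intervals that are intervals) $X,Y,Z$, $Z$ lies between $X$ and $Y$ if the right end-point of $X$ is smaller than the left end-point of $Z$ and the right end-point of $Z$ is smaller than the left end-point of $Y$. *)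

theory Defs
  imports Complex_Main
begin

definition graph :: "'a set \<Rightarrow> ('a \<Rightarrow> 'a \<Rightarrow> bool) \<Rightarrow> bool" where
  "graph V E \<longleftrightarrow> finite V \<and> (\<forall>u v. E u v \<longrightarrow> u \<in> V \<and> v \<in> V \<and> u \<noteq> v)
     \<and> (\<forall>u v. E u v \<longrightarrow> E v u)"

definition interval :: "('a \<Rightarrow> int) \<Rightarrow> ('a \<Rightarrow> int) \<Rightarrow> 'a \<Rightarrow> real set" where
  "interval lp rp u = {real_of_int (lp u) .. real_of_int (rp u)}"

definition interval_rep :: "'a set \<Rightarrow> ('a \<Rightarrow> 'a \<Rightarrow> bool) \<Rightarrow> ('a \<Rightarrow> int) \<Rightarrow> ('a \<Rightarrow> int) \<Rightarrow> bool" where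
  "interval_rep V E lp rp \<longleftrightarrow>
     (\<forall>u\<in>V. lp u < rp u) \<and>
     (\<forall>u\<in>V. \<forall>v\<in>V. u \<noteq> v \<longrightarrow> lp u \<noteq> lp v \<and> rp u \<noteq> rp v \<and> lp u \<noteq> rp v) \<and>
     (\<forall>u\<in>V. \<forall>v\<in>V. u \<noteq> v \<longrightarrow> (E u v \<longleftrightarrow> interval lp rp u \<inter> interval lp rp v \<noteq> {}))"

definition is_path :: "'a set \<Rightarrow> ('a \<Rightarrow> 'a \<Rightarrow> bool) \<Rightarrow> 'a list \<Rightarrow> bool" where
  "is_path V E P \<longleftrightarrow> P \<noteq> [] \<and> distinct P \<and> set P \<subseteq> V \<and>
     (\<forall>i. Suc i < length P \<longrightarrow> E (P ! i) (P ! Suc i))"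

definition ends :: "'a list \<Rightarrow> 'a set" where
  "ends P = {hd P, last P}"

definition inner :: "'a list \<Rightarrow> 'a set" where
  "inner P = set (butlast (tl P))"

definition no_inner_chord :: "('a \<Rightarrow> 'a \<Rightarrow> bool) \<Rightarrow> 'a list \<Rightarrow> bool" where
  "no_inner_chord E P \<longleftrightarrow>
     (\<forall>i j. i + 1 < j \<and> j < length P \<and> (P ! i \<in> inner P \<or> P ! j \<in> inner P)
        \<longrightarrow> \<not> E (P ! i) (P ! j))"

definition mutually_induced :: "('a \<Rightarrow> 'a \<Rightarrow> bool) \<Rightarrow> nat \<Rightarrow> (nat \<Rightarrow> 'a list) \<Rightarrow> bool" where
  "mutually_induced E l Ps \<longleftrightarrow>
     (\<forall>a<l. \<forall>b<l. a \<noteq> b \<longrightarrow> Ps a \<noteq> Ps b \<and> Ps a \<noteq> rev (Ps b)) \<and>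
     (\<forall>a<l. no_inner_chord E (Ps a)) \<and>
     (\<forall>a<l. \<forall>b<l. a \<noteq> b \<longrightarrow> set (Ps a) \<inter> set (Ps b) \<subseteq> ends (Ps a) \<inter> ends (Ps b)) \<and>
     (\<forall>a<l. \<forall>b<l. a \<noteq> b \<longrightarrow>
        (\<forall>u\<in>inner (Ps a). \<forall>v\<in>set (Ps b). E u v \<longrightarrow> v \<in> ends (Ps a) \<inter> ends (Ps b)))"

definition joins :: "'a list \<Rightarrow> 'a \<Rightarrow> 'a \<Rightarrow> bool" where
  "joins P x y \<longleftrightarrow> P \<noteq> [] \<and> ((hd P = x \<and> last P = y) \<or> (hd P = y \<and> last P = x))"

text \<open>Instance of Requirement Induced Disjoint Paths: s i, t i are the vertices
  representing the terminals s_i, t_i (i < k); r i the requirements.\<close>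
definition rip_instance :: "'a set \<Rightarrow> nat \<Rightarrow> (nat \<Rightarrow> 'a) \<Rightarrow> (nat \<Rightarrow> 'a) \<Rightarrow> (nat \<Rightarrow> nat) \<Rightarrow> bool" where
  "rip_instance V k s t r \<longleftrightarrow>
     (\<forall>i<k. s i \<in> V \<and> t i \<in> V \<and> s i \<noteq> t i \<and> 0 < r i) \<and>
     (\<forall>i<k. \<forall>j<k. i \<noteq> j \<longrightarrow> {s i, t i} \<noteq> {s j, t j})"

definition rip_solution :: "'a set \<Rightarrow> ('a \<Rightarrow> 'a \<Rightarrow> bool) \<Rightarrow> nat \<Rightarrow> (nat \<Rightarrow> 'a) \<Rightarrow> (nat \<Rightarrow> 'a)
    \<Rightarrow> (nat \<Rightarrow> nat) \<Rightarrow> (nat \<Rightarrow> 'a list) \<Rightarrow> bool" where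
  "rip_solution V E k s t r Ps \<longleftrightarrow>
     (\<forall>a<(\<Sum>i<k. r i). is_path V E (Ps a)) \<and>
     mutually_induced E (\<Sum>i<k. r i) Ps \<and>
     (\<forall>i<k. card {a. a < (\<Sum>i<k. r i) \<and> joins (Ps a) (s i) (t i)} = r i)"

definition inner_union :: "('a \<Rightarrow> int) \<Rightarrow> ('a \<Rightarrow> int) \<Rightarrow> 'a list \<Rightarrow> real set" where
  "inner_union lp rp P = (\<Union>u\<in>inner P. interval lp rp u)"

definition lies_between :: "real set \<Rightarrow> real set \<Rightarrow> real set \<Rightarrow> bool" where
  "lies_between Z X Y \<longleftrightarrow> Sup X < Inf Z \<and> Sup Z < Inf Y"

end

theory Submission
  imports Defs
begin

text \<open>Every inner vertex u of a path is adjacent to no vertex of another path except common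
  end-points, and in an interval representation adjacency is intersection; so the interval of u
  is disjoint from those of all vertices of other paths that are not ends of its own path. This
  separates the sets I_P from each other and from foreign terminal vertices, while the first and
  last edge of a path make I_P meet the intervals of both its ends. Finally, if I_{P_c} lay
  between I_{P_a} and I_{P_b}, whose colour is i, then every point of I_{P_c} would lie in the
  intervals of s_i and t_i (each meets both I_{P_a} and I_{P_b}); as I_{P_c} avoids all terminal
  vertices not joined by P_c, this forces {s_i, t_i} = {s_j, t_j}.\<close>

lemma inner_subset_set: "inner P \<subseteq> set P"
  unfolding inner_def by (cases P) (auto dest: in_set_butlastD)

lemma inner_notin_ends:
  assumes "distinct P" "u \<in> inner P"
  shows "u \<notin> ends P"
proof -
  obtain x xs where P: "P = x # xs"
    using assms(2) by (cases P) (auto simp: inner_def)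
  then obtain ys y where "xs = ys @ [y]"
    using assms(2) by (cases xs rule: rev_cases) (auto simp: inner_def)
  with assms P show ?thesis
    by (auto simp: inner_def ends_def)
qed

lemma nth_mem_inner:
  assumes "0 < i" "i < length P - 1"
  shows "P ! i \<in> inner P"
proof -
  have "butlast (tl P) ! (i - 1) = P ! i"
    using assms by (simp add: nth_butlast nth_tl)
  moreover have "i - 1 < length (butlast (tl P))"
    using assms by simp
  ultimately show ?thesis
    unfolding inner_def by (metis nth_mem)
qed

lemma inner_nonempty_length: "inner P \<noteq> {} \<Longrightarrow> 3 \<le> length P"
proof -
  assume "inner P \<noteq> {}"
  then have "0 < length (butlast (tl P))"
    unfolding inner_def by (metis length_greater_0_conv set_empty)
  then show ?thesis
    by simp
qed

lemma path_end_adjacent_inner: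
  assumes "is_path V E P" "inner P \<noteq> {}" "w \<in> ends P"
  shows "\<exists>u\<in>inner P. E w u \<or> E u w"
proof -
  define n where "n = length P"
  have n: "3 \<le> n"
    using inner_nonempty_length[OF assms(2)] by (simp add: n_def)
  have "E (P ! 0) (P ! 1)" "E (P ! (n - 2)) (P ! Suc (n - 2))"
    using assms(1) n by (simp_all add: is_path_def n_def)
  moreover have "P \<noteq> []" "Suc (n - 2) = n - 1"
    using n by (auto simp: n_def)
  then have "hd P = P ! 0" "last P = P ! Suc (n - 2)"
    by (simp_all add: n_def hd_conv_nth last_conv_nth)
  moreover have "P ! 1 \<in> inner P" "P ! (n - 2) \<in> inner P"
    using n by (auto simp: n_def intro: nth_mem_inner)
  ultimately show ?thesis
    using assms(3) by (auto simp: ends_def)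
qed

lemma interval_lower_mem:
  "interval_rep V E lp rp \<Longrightarrow> u \<in> V \<Longrightarrow> real_of_int (lp u) \<in> interval lp rp u"
  unfolding interval_rep_def interval_def by auto

lemma intervals_meet_iff_adjacent:
  assumes "graph V E" "interval_rep V E lp rp" "u \<in> V" "v \<in> V" "u \<noteq> v"
  shows "interval lp rp u \<inter> interval lp rp v \<noteq> {} \<longleftrightarrow> E u v"
  using assms unfolding interval_rep_def by blast

lemma adjacent_intervals_meet:
  "graph V E \<Longrightarrow> interval_rep V E lp rp \<Longrightarrow> E u v \<Longrightarrow> interval lp rp u \<inter> interval lp rp v \<noteq> {}"
  unfolding graph_def interval_rep_def by blast

lemma inner_union_meets_ends:
  assumes "graph V E" "interval_rep V E lp rp" "is_path V E P" "inner P \<noteq> {}" "w \<in> ends P"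
  shows "inner_union lp rp P \<inter> interval lp rp w \<noteq> {}"
proof -
  obtain u where u: "u \<in> inner P" "E w u \<or> E u w"
    using path_end_adjacent_inner[OF assms(3-5)] by blast
  then have "interval lp rp u \<inter> interval lp rp w \<noteq> {}"
    using adjacent_intervals_meet[OF assms(1,2)] by blast
  with u(1) show ?thesis
    unfolding inner_union_def by blast
qed

lemma bdd_inner_union: "bdd_above (inner_union lp rp P)" "bdd_below (inner_union lp rp P)"
  unfolding inner_union_def inner_def interval_def by simp_all

lemma lies_between_subset_interval:
  fixes X Y Z :: "real set"
  assumes "lies_between Z X Y" "bdd_above X" "bdd_below Y" "bdd_above Z" "bdd_below Z"
    and "X \<inter> {l..h} \<noteq> {}" "Y \<inter> {l..h} \<noteq> {}"
  shows "Z \<subseteq> {l..h}"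
proof
  fix z assume z: "z \<in> Z"
  obtain x y where "x \<in> X" "x \<in> {l..h}" "y \<in> Y" "y \<in> {l..h}"
    using assms(6,7) by blast
  moreover have "Sup X < z" "z < Inf Y"
    using assms(1) cInf_lower[OF z assms(5)] cSup_upper[OF z assms(4)]
    unfolding lies_between_def by linarith+
  ultimately show "z \<in> {l..h}"
    using cSup_upper[OF _ assms(2)] cInf_lower[OF _ assms(3)] by force
qed

locale rip_interval_solution =
  fixes V :: "'a set" and E :: "'a \<Rightarrow> 'a \<Rightarrow> bool" and lp rp :: "'a \<Rightarrow> int"
    and k :: nat and s t :: "nat \<Rightarrow> 'a" and r :: "nat \<Rightarrow> nat" and Ps :: "nat \<Rightarrow> 'a list"
  assumes graph: "graph V E"
    and rep: "interval_rep V E lp rp"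
    and inst: "rip_instance V k s t r"
    and solution: "rip_solution V E k s t r Ps"
begin

abbreviation num_paths :: nat where
  "num_paths \<equiv> \<Sum>i<k. r i"

lemma is_path_Ps: "a < num_paths \<Longrightarrow> is_path V E (Ps a)"
  using solution unfolding rip_solution_def by blast

lemma shared_vertices_are_ends:
  "a < num_paths \<Longrightarrow> b < num_paths \<Longrightarrow> a \<noteq> b \<Longrightarrow>
    set (Ps a) \<inter> set (Ps b) \<subseteq> ends (Ps a) \<inter> ends (Ps b)"
  using solution unfolding rip_solution_def mutually_induced_def by blast

lemma inner_neighbour_is_end:
  "a < num_paths \<Longrightarrow> b < num_paths \<Longrightarrow> a \<noteq> b \<Longrightarrow> u \<in> inner (Ps a) \<Longrightarrow> v \<in> set (Ps b) \<Longrightarrow>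
    E u v \<Longrightarrow> v \<in> ends (Ps a) \<inter> ends (Ps b)"
  using solution unfolding rip_solution_def mutually_induced_def by blast

lemma ex_path_joining:
  assumes "j < k"
  obtains b where "b < num_paths" "joins (Ps b) (s j) (t j)"
proof -
  have "card {b. b < num_paths \<and> joins (Ps b) (s j) (t j)} = r j" "0 < r j"
    using assms solution inst unfolding rip_solution_def rip_instance_def by blast+
  then show ?thesis
    using that by (metis (no_types, lifting) card.empty empty_Collect_eq less_irrefl)
qed

lemma inner_interval_disjoint:
  assumes a: "a < num_paths" and b: "b < num_paths" and "a \<noteq> b"
    and u: "u \<in> inner (Ps a)" and v: "v \<in> set (Ps b)" "v \<notin> ends (Ps a)"
  shows "interval lp rp u \<inter> interval lp rp v = {}"
proof -
  have "u \<in> set (Ps a)" "u \<notin> ends (Ps a)"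
    using u inner_subset_set[of "Ps a"] inner_notin_ends[of "Ps a" u] is_path_Ps[OF a]
    by (auto simp: is_path_def)
  then have "u \<noteq> v"
    using shared_vertices_are_ends[OF a b \<open>a \<noteq> b\<close>] v by blast
  moreover have "u \<in> V" "v \<in> V"
    using \<open>u \<in> set (Ps a)\<close> v is_path_Ps[OF a] is_path_Ps[OF b] by (auto simp: is_path_def)
  ultimately show ?thesis
    using intervals_meet_iff_adjacent[OF graph rep] inner_neighbour_is_end[OF a b \<open>a \<noteq> b\<close> u] v
    by blast
qed

lemma inner_union_avoids_other_terminals:
  assumes a: "a < num_paths" and "joins (Ps a) (s i) (t i)"
    and v: "v \<in> s ` {..<k} \<union> t ` {..<k}" "v \<noteq> s i" "v \<noteq> t i"
  shows "inner_union lp rp (Ps a) \<inter> interval lp rp v = {}"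
proof -
  obtain j where j: "j < k" "v = s j \<or> v = t j"
    using v(1) by blast
  obtain b where b: "b < num_paths" "joins (Ps b) (s j) (t j)"
    using ex_path_joining[OF j(1)] .
  have "v \<in> ends (Ps b)" "v \<notin> ends (Ps a)"
    using j(2) b(2) assms(2) v(2,3) by (auto simp: joins_def ends_def)
  moreover from this have "v \<in> set (Ps b)" "a \<noteq> b"
    using is_path_Ps[OF b(1)] by (auto simp: ends_def is_path_def)
  ultimately show ?thesis
    using inner_interval_disjoint[OF a b(1)] unfolding inner_union_def by blast
qed

lemma inner_unions_disjoint:
  assumes a: "a < num_paths" and b: "b < num_paths" and "a \<noteq> b"
  shows "inner_union lp rp (Ps a) \<inter> inner_union lp rp (Ps b) = {}"
proof -
  have "interval lp rp u \<inter> interval lp rp w = {}"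
    if u: "u \<in> inner (Ps a)" and w: "w \<in> inner (Ps b)" for u w
  proof -
    have "w \<in> set (Ps b)" "w \<notin> ends (Ps b)"
      using w inner_subset_set[of "Ps b"] inner_notin_ends[of "Ps b" w] is_path_Ps[OF b]
      by (auto simp: is_path_def)
    moreover have "w \<notin> ends (Ps a)"
    proof
      assume "w \<in> ends (Ps a)"
      then have "w \<in> set (Ps a)"
        using is_path_Ps[OF a] by (auto simp: ends_def is_path_def)
      with \<open>w \<in> set (Ps b)\<close> \<open>w \<notin> ends (Ps b)\<close> show False
        using shared_vertices_are_ends[OF a b \<open>a \<noteq> b\<close>] by blast
    qed
    ultimately show ?thesis
      using inner_interval_disjoint[OF a b \<open>a \<noteq> b\<close> u] by blast
  qed
  then show ?thesis
    unfolding inner_union_def by blast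
qed

lemma not_lies_between_other_colour:
  assumes i: "i < k" and j: "j < k" "i \<noteq> j"
    and a: "a < num_paths" "joins (Ps a) (s i) (t i)" "inner (Ps a) \<noteq> {}"
    and b: "b < num_paths" "joins (Ps b) (s i) (t i)" "inner (Ps b) \<noteq> {}"
    and c: "c < num_paths" "joins (Ps c) (s j) (t j)" "inner (Ps c) \<noteq> {}"
  shows "\<not> lies_between (inner_union lp rp (Ps c)) (inner_union lp rp (Ps a)) (inner_union lp rp (Ps b))"
proof
  assume between: "lies_between (inner_union lp rp (Ps c)) (inner_union lp rp (Ps a)) (inner_union lp rp (Ps b))"
  obtain u where u: "u \<in> inner (Ps c)"
    using c(3) by blast
  then have "u \<in> V"
    using inner_subset_set[of "Ps c"] is_path_Ps[OF c(1)] by (auto simp: is_path_def)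
  with u have z: "real_of_int (lp u) \<in> inner_union lp rp (Ps c)"
    unfolding inner_union_def using interval_lower_mem[OF rep] by blast
  have covered: "inner_union lp rp (Ps c) \<subseteq> interval lp rp w" if "w \<in> {s i, t i}" for w
  proof -
    have "w \<in> ends (Ps a)" "w \<in> ends (Ps b)"
      using that a(2) b(2) by (auto simp: joins_def ends_def)
    then have "inner_union lp rp (Ps a) \<inter> {lp w..rp w} \<noteq> {}"
      "inner_union lp rp (Ps b) \<inter> {lp w..rp w} \<noteq> {}"
      using inner_union_meets_ends[OF graph rep is_path_Ps[OF a(1)] a(3)]
        inner_union_meets_ends[OF graph rep is_path_Ps[OF b(1)] b(3)]
      by (simp_all add: interval_def)
    then show ?thesis
      using lies_between_subset_interval[OF between bdd_inner_union(1) bdd_inner_union(2)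
          bdd_inner_union]
      by (simp add: interval_def)
  qed
  have "w \<in> {s j, t j}" if "w \<in> {s i, t i}" for w
  proof (rule ccontr)
    assume "w \<notin> {s j, t j}"
    then have "inner_union lp rp (Ps c) \<inter> interval lp rp w = {}"
      using inner_union_avoids_other_terminals[OF c(1,2)] that i by auto
    with z covered[OF that] show False
      by blast
  qed
  then have "{s i, t i} \<subseteq> {s j, t j}"
    by blast
  moreover have "s i \<noteq> t i" "{s i, t i} \<noteq> {s j, t j}"
    using inst i j unfolding rip_instance_def by auto
  ultimately show False
    by auto
qed

end

theorem lemma1:
  fixes V :: "'a set" and E :: "'a \<Rightarrow> 'a \<Rightarrow> bool" and lp rp :: "'a \<Rightarrow> int"
    and k :: nat and s t :: "nat \<Rightarrow> 'a" and r :: "nat \<Rightarrow> nat" and Ps :: "nat \<Rightarrow> 'a list"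
  assumes "graph V E"
    and "interval_rep V E lp rp"
    and "rip_instance V k s t r"
    and "rip_solution V E k s t r Ps"
  shows "(\<forall>i<k. \<forall>a<(\<Sum>i<k. r i). joins (Ps a) (s i) (t i) \<and> inner (Ps a) \<noteq> {} \<longrightarrow>
            inner_union lp rp (Ps a) \<inter> interval lp rp (s i) \<noteq> {} \<and>
            inner_union lp rp (Ps a) \<inter> interval lp rp (t i) \<noteq> {} \<and>
            (\<forall>v \<in> s ` {..<k} \<union> t ` {..<k}. v \<noteq> s i \<and> v \<noteq> t i \<longrightarrow>
               inner_union lp rp (Ps a) \<inter> interval lp rp v = {}))
       \<and> (\<forall>a<(\<Sum>i<k. r i). \<forall>b<(\<Sum>i<k. r i). a \<noteq> b \<and> inner (Ps a) \<noteq> {} \<and> inner (Ps b) \<noteq> {} \<longrightarrow>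
            inner_union lp rp (Ps a) \<inter> inner_union lp rp (Ps b) = {})
       \<and> (\<forall>i<k. \<forall>j<k. \<forall>a<(\<Sum>i<k. r i). \<forall>b<(\<Sum>i<k. r i). \<forall>c<(\<Sum>i<k. r i).
            i \<noteq> j \<and> joins (Ps a) (s i) (t i) \<and> joins (Ps b) (s i) (t i) \<and> joins (Ps c) (s j) (t j)
            \<and> inner (Ps a) \<noteq> {} \<and> inner (Ps b) \<noteq> {} \<and> inner (Ps c) \<noteq> {} \<longrightarrow>
            \<not> lies_between (inner_union lp rp (Ps c)) (inner_union lp rp (Ps a)) (inner_union lp rp (Ps b)))"
proof -
  interpret rip_interval_solution V E lp rp k s t r Ps
    using assms by unfold_locales
  have terminals_are_ends: "s i \<in> ends (Ps a)" "t i \<in> ends (Ps a)"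
    if "joins (Ps a) (s i) (t i)" for a i
    using that by (auto simp: joins_def ends_def)
  show ?thesis
  proof (intro conjI allI impI; elim conjE)
    fix i a
    assume "a < num_paths" "joins (Ps a) (s i) (t i)" "inner (Ps a) \<noteq> {}"
    then show "inner_union lp rp (Ps a) \<inter> interval lp rp (s i) \<noteq> {}"
      "inner_union lp rp (Ps a) \<inter> interval lp rp (t i) \<noteq> {}"
      "\<forall>v \<in> s ` {..<k} \<union> t ` {..<k}. v \<noteq> s i \<and> v \<noteq> t i \<longrightarrow>
         inner_union lp rp (Ps a) \<inter> interval lp rp v = {}"
      using inner_union_meets_ends[OF graph rep is_path_Ps] terminals_are_ends
        inner_union_avoids_other_terminals by blast+
  qed (use inner_unions_disjoint not_lies_between_other_colour in blast)+
qed

end
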